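(* Let $A_h,B\in\mathcal L(\mathbb R^{N\times N}_s)$ be symmetric positive tensors and $\gamma>0$ such that $\gamma A_h-B$ is positive. Let $S(t)=-Be^{-\gamma t}$, $t\geq0$, and $LS(z)=\int_0^\infty e^{-zt}S(t)dt$ its Laplace transform. Then there exists $c>0$ such that for all $z\in\mathbb C$ with $\mathrm{Re}(z)>0$ and all $\xi\in\mathbb C^{N\times N}_s$, $$\mathrm{Re}\big((A_h+LS(z))\xi:\overline{z\xi}\big)\geq c\Big(\mathrm{Re}(z)+\frac{|z|^2}{1+|z|^2}\Big)|\xi|^2,\qquad \mathrm{Im}\big((A_h+LS(z))\xi:\overline{z\xi}\big)\,\mathrm{Im}(z)\leq-c|\mathrm{Im}(z)|^2|\xi|^2.$$
   Context: $\xi:\eta=\sum_{ij}\xi_{ij}\eta_{ij}$ (bilinear, no conjugation); $\mathbb C^{N\times N}_s$ denotes complex symmetric matrices and tensors in $\mathcal L(\mathbb R^{N\times N}_s)$ are extended complex-linearly. A tensor $M$ is positive if $M\xi:\xi>0$ for $\xi\neq0$ real symmetric. *)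

theory Defs
  imports "HOL-Analysis.Analysis"
begin

text \<open>N x N matrices are indexed by a finite type 'n (N = CARD('n)).
  A tensor in L(R^{NxN}_s) is represented by a linear map on real^'n^'n that maps
  symmetric matrices to symmetric matrices; only its values on symmetric matrices matter.\<close>

definition sym_mat :: "'a^'n^'n \<Rightarrow> bool" where
  "sym_mat X \<longleftrightarrow> (\<forall>i j. X$i$j = X$j$i)"

text \<open>Double contraction xi : eta = sum_ij xi_ij eta_ij (bilinear, no conjugation).\<close>
definition ddot :: "'a::comm_ring_1^'n::finite^'n \<Rightarrow> 'a^'n^'n \<Rightarrow> 'a" (infixl ":::" 70) where
  "ddot X Y = (\<Sum>i\<in>UNIV. \<Sum>j\<in>UNIV. X$i$j * Y$i$j)"

definition is_tensor :: "(real^'n^'n \<Rightarrow> real^'n^'n) \<Rightarrow> bool" where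
  "is_tensor M \<longleftrightarrow> linear M \<and> (\<forall>X. sym_mat X \<longrightarrow> sym_mat (M X))"

definition sym_tensor :: "(real^'n::finite^'n \<Rightarrow> real^'n^'n) \<Rightarrow> bool" where
  "sym_tensor M \<longleftrightarrow> (\<forall>X Y. sym_mat X \<longrightarrow> sym_mat Y \<longrightarrow> (M X) ::: Y = X ::: (M Y))"

definition positive_tensor :: "(real^'n::finite^'n \<Rightarrow> real^'n^'n) \<Rightarrow> bool" where
  "positive_tensor M \<longleftrightarrow> (\<forall>X. sym_mat X \<longrightarrow> X \<noteq> 0 \<longrightarrow> (M X) ::: X > 0)"

definition mRe :: "complex^'n^'n \<Rightarrow> real^'n^'n" where
  "mRe X = (\<chi> i j. Re (X$i$j))"

definition mIm :: "complex^'n^'n \<Rightarrow> real^'n^'n" where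
  "mIm X = (\<chi> i j. Im (X$i$j))"

definition mcnj :: "complex^'n^'n \<Rightarrow> complex^'n^'n" where
  "mcnj X = (\<chi> i j. cnj (X$i$j))"

definition mscale :: "complex \<Rightarrow> complex^'n^'n \<Rightarrow> complex^'n^'n" where
  "mscale z X = (\<chi> i j. z * X$i$j)"

definition cext :: "(real^'n^'n \<Rightarrow> real^'n^'n) \<Rightarrow> complex^'n^'n \<Rightarrow> complex^'n^'n" where
  "cext M X = (\<chi> i j. Complex ((M (mRe X))$i$j) ((M (mIm X))$i$j))"

definition laplace_tensor :: "(real \<Rightarrow> real^'n^'n \<Rightarrow> real^'n^'n) \<Rightarrow> complex \<Rightarrow> complex^'n^'n \<Rightarrow> complex^'n^'n" where
  "laplace_tensor S z X = (\<chi> i j. integral {0..} (\<lambda>t. exp (- z * complex_of_real t) * (cext (S t) X)$i$j))"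

end

theory Submission
  imports Defs
begin

(*
  Since S(t) = -e^(-gamma t) B, the Laplace transform is LS(z) = -B/(z + gamma), so for symmetric xi
  the form equals conj z (a - b/(z + gamma)) with the real numbers a = A xi : conj xi and
  b = B xi : conj xi.  Positivity of B and of gamma A - B on the compact unit sphere of symmetric
  matrices gives mu > 0 with b >= mu |xi|^2 and gamma a - b >= gamma mu |xi|^2.  With z = x + iy and
  D = |z + gamma|^2 the real part is x (a - b (x + gamma)/D) + b y^2/D >= mu |xi|^2 (x + y^2/D), and
  x + y^2/D dominates (x + |z|^2/(1 + |z|^2)) / (2 (1 + gamma^2)).  The imaginary part is
  -y (a - b (2x + gamma)/D), and a - b (2x + gamma)/D >= a - b/gamma >= mu |xi|^2.
*)

lemma has_integral_cexp_neg_interval: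
  fixes w :: complex
  assumes "w \<noteq> 0" and "0 \<le> b"
  shows "((\<lambda>t. exp (- w * of_real t)) has_integral (1 - exp (- w * of_real b)) / w) {0..b}"
proof -
  have "((\<lambda>u. - exp (- w * u) / w) has_field_derivative exp (- w * of_real t)) (at (of_real t))"
    for t :: real
    using assms(1) by (auto intro!: derivative_eq_intros simp: field_simps)
  then have "((\<lambda>t. exp (- w * of_real t)) has_integral
      - exp (- w * of_real b) / w - - exp (- w * of_real 0) / w) {0..b}"
    using assms(2) by (intro fundamental_theorem_of_calculus has_vector_derivative_real_field) auto
  then show ?thesis
    by (simp add: diff_divide_distrib)
qed

lemma has_integral_cexp_neg_to_infinity:
  fixes w :: complex
  assumes w: "0 < Re w"
  shows "((\<lambda>t. exp (- w * of_real t)) has_integral 1 / w) {0..}"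
proof (rule has_integral_dominated_convergence)
  let ?f = "\<lambda>k::nat. \<lambda>t. if t \<in> {0..real k} then exp (- w * of_real t) else 0"
  have w0: "w \<noteq> 0"
    using w by auto
  show "(?f k has_integral (1 - exp (- w * of_real (real k))) / w) {0..}" for k
    using has_integral_cexp_neg_interval[OF w0, of "real k"] by (subst has_integral_restrict) auto
  show "(\<lambda>t. exp (- Re w * t)) integrable_on {0..}"
    using integrable_on_exp_minus_to_infinity[OF w] .
  show "\<forall>t\<in>{0..}. norm (?f k t) \<le> exp (- Re w * t)" for k
    by simp
  show "\<forall>t\<in>{0..}. (\<lambda>k. ?f k t) \<longlonglongrightarrow> exp (- w * of_real t)"
  proof
    fix t :: real
    assume "t \<in> {0..}"
    have "\<forall>\<^sub>F k in sequentially. t \<le> real k"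
      by (meson eventually_sequentiallyI nat_ceiling_le_eq)
    then have "\<forall>\<^sub>F k in sequentially. ?f k t = exp (- w * of_real t)"
      using \<open>t \<in> {0..}\<close> by (auto elim!: eventually_mono)
    then show "(\<lambda>k. ?f k t) \<longlonglongrightarrow> exp (- w * of_real t)"
      by (rule tendsto_eventually)
  qed
  have "exp (- w * of_real (real k)) = exp (- w) ^ k" for k
    by (simp add: exp_of_nat_mult[symmetric] mult.commute)
  moreover have "(\<lambda>k. exp (- w) ^ k) \<longlonglongrightarrow> 0"
    using w by (intro LIMSEQ_power_zero) simp
  ultimately have "(\<lambda>k. exp (- w * of_real (real k))) \<longlonglongrightarrow> 0"
    by simp
  then have "(\<lambda>k. (1 - exp (- w * of_real (real k))) / w) \<longlonglongrightarrow> (1 - 0) / w"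
    using w0 by (intro tendsto_intros) auto
  then show "(\<lambda>k. (1 - exp (- w * of_real (real k))) / w) \<longlonglongrightarrow> 1 / w"
    by simp
qed

lemma ddot_real_eq_inner: "(X::real^'n::finite^'n) ::: Y = inner X Y"
  by (simp add: ddot_def inner_vec_def)

lemma subspace_sym_mat: "subspace {X::'a::real_vector^'n^'n. sym_mat X}"
  by (auto simp: subspace_def sym_mat_def)

lemma positive_on_subspace_imp_coercive:
  fixes M :: "'a::euclidean_space \<Rightarrow> 'a"
  assumes "linear M" and "subspace S" and pos: "\<And>x. x \<in> S \<Longrightarrow> x \<noteq> 0 \<Longrightarrow> 0 < inner (M x) x"
  shows "\<exists>\<alpha>>0. \<forall>x\<in>S. \<alpha> * (norm x)\<^sup>2 \<le> inner (M x) x"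
proof -
  have normalize: "x /\<^sub>R norm x \<in> S \<inter> sphere 0 1" if "x \<in> S" "x \<noteq> 0" for x
    using that \<open>subspace S\<close> by (simp add: subspace_mul)
  show ?thesis
  proof (cases "S \<inter> sphere 0 1 = {}")
    case True
    then have "S \<subseteq> {0}"
      using normalize by blast
    then show ?thesis
      using linear_0[OF \<open>linear M\<close>] by (intro exI[of _ 1]) auto
  next
    case False
    let ?q = "\<lambda>x. inner (M x) x"
    have "compact (S \<inter> sphere 0 1)"
      using \<open>subspace S\<close> by (intro closed_Int_compact closed_subspace compact_sphere)
    moreover have "continuous_on (S \<inter> sphere 0 1) ?q"
      using \<open>linear M\<close> by (intro continuous_intros linear_continuous_on) (simp add: linear_conv_bounded_linear)
    ultimately obtain u where u: "u \<in> S \<inter> sphere 0 1" and u_min: "\<And>x. x \<in> S \<inter> sphere 0 1 \<Longrightarrow> ?q u \<le> ?q x"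
      using continuous_attains_inf[OF _ False] by blast
    have "?q u * (norm x)\<^sup>2 \<le> ?q x" if "x \<in> S" for x
    proof (cases "x = 0")
      case True
      then show ?thesis
        using linear_0[OF \<open>linear M\<close>] by simp
    next
      case False
      have "?q u \<le> ?q (x /\<^sub>R norm x)"
        using normalize[OF \<open>x \<in> S\<close> False] by (rule u_min)
      also have "\<dots> = ?q x / (norm x)\<^sup>2"
        by (simp add: linear_cmul[OF \<open>linear M\<close>] power2_eq_square divide_inverse mult_ac)
      finally show ?thesis
        using False by (simp add: field_simps)
    qed
    moreover have "0 < ?q u"
      using u by (intro pos) auto
    ultimately show ?thesis
      by blast
  qed
qed

lemma sym_mat_mRe: "sym_mat \<xi> \<Longrightarrow> sym_mat (mRe \<xi>)"
  by (simp add: sym_mat_def mRe_def)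

lemma sym_mat_mIm: "sym_mat \<xi> \<Longrightarrow> sym_mat (mIm \<xi>)"
  by (simp add: sym_mat_def mIm_def)

lemma power2_norm_mRe_mIm: "(norm \<xi>)\<^sup>2 = (norm (mRe \<xi>))\<^sup>2 + (norm (mIm \<xi>))\<^sup>2"
  by (simp add: power2_norm_eq_inner inner_vec_def inner_complex_def mRe_def mIm_def sum.distrib)

definition herm_form :: "(real^'n^'n \<Rightarrow> real^'n^'n) \<Rightarrow> complex^'n^'n \<Rightarrow> real" where
  "herm_form M \<xi> = inner (M (mRe \<xi>)) (mRe \<xi>) + inner (M (mIm \<xi>)) (mIm \<xi>)"

lemma positive_tensor_coercive:
  fixes M :: "real^'n::finite^'n \<Rightarrow> real^'n^'n"
  assumes "linear M" and "positive_tensor M"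
  shows "\<exists>\<alpha>>0. \<forall>\<xi>. sym_mat \<xi> \<longrightarrow> \<alpha> * (norm \<xi>)\<^sup>2 \<le> herm_form M \<xi>"
proof -
  obtain \<alpha> where "\<alpha> > 0" and \<alpha>: "\<And>X. sym_mat X \<Longrightarrow> \<alpha> * (norm X)\<^sup>2 \<le> inner (M X) X"
    using positive_on_subspace_imp_coercive[OF \<open>linear M\<close> subspace_sym_mat] \<open>positive_tensor M\<close>
    by (auto simp: positive_tensor_def ddot_real_eq_inner)
  have "\<alpha> * (norm \<xi>)\<^sup>2 \<le> herm_form M \<xi>" if "sym_mat \<xi>" for \<xi> :: "complex^'n^'n"
    using \<alpha>[OF sym_mat_mRe[OF that]] \<alpha>[OF sym_mat_mIm[OF that]]
    by (simp add: herm_form_def power2_norm_mRe_mIm distrib_left)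
  with \<open>\<alpha> > 0\<close> show ?thesis
    by blast
qed

lemma ddot_add_left: "(U + V) ::: W = U ::: W + V ::: W"
  by (simp add: ddot_def distrib_right sum.distrib)

lemma ddot_uminus_left: "(- U) ::: V = - (U ::: V)"
  by (simp add: ddot_def sum_negf)

lemma ddot_mscale_left: "mscale w U ::: V = w * (U ::: V)"
  by (simp add: ddot_def mscale_def sum_distrib_left mult.assoc)

lemma ddot_mcnj_mscale_right: "U ::: mcnj (mscale w \<xi>) = cnj w * (U ::: mcnj \<xi>)"
  by (simp add: ddot_def mcnj_def mscale_def sum_distrib_left mult_ac)

lemma cext_ddot_mcnj:
  assumes "sym_tensor M" and "sym_mat \<xi>"
  shows "cext M \<xi> ::: mcnj \<xi> = of_real (herm_form M \<xi>)"
proof -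
  let ?X = "mRe \<xi>" and ?Y = "mIm \<xi>"
  have "inner (M ?X) ?Y = inner (M ?Y) ?X"
    using assms unfolding sym_tensor_def ddot_real_eq_inner
    by (metis inner_commute sym_mat_mRe sym_mat_mIm)
  then show ?thesis
    by (simp add: complex_eq_iff ddot_def cext_def mcnj_def herm_form_def
        inner_vec_def mRe_def mIm_def sum.distrib sum_subtractf algebra_simps)
qed

lemma cext_scaleR: "cext (\<lambda>X. c *\<^sub>R M X) \<xi> = mscale (of_real c) (cext M \<xi>)"
  by (simp add: cext_def mscale_def vec_eq_iff complex_eq_iff)

lemma cext_uminus: "cext (\<lambda>X. - M X) \<xi> = - cext M \<xi>"
  by (simp add: cext_def vec_eq_iff complex_eq_iff)

lemma laplace_tensor_exp_kernel:
  assumes "0 < Re z + \<gamma>"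
  shows "laplace_tensor (\<lambda>t X. exp (- \<gamma> * t) *\<^sub>R M X) z \<xi> = mscale (1 / (z + of_real \<gamma>)) (cext M \<xi>)"
proof -
  have kernel: "exp (- z * of_real t) * of_real (exp (- \<gamma> * t)) = exp (- (z + of_real \<gamma>) * of_real t)"
    for t :: real
    by (simp add: exp_of_real[symmetric] exp_add[symmetric] algebra_simps)
  have "exp (- z * of_real t) * (cext (\<lambda>X. exp (- \<gamma> * t) *\<^sub>R M X) \<xi>)$i$j
      = (cext M \<xi>)$i$j * exp (- (z + of_real \<gamma>) * of_real t)" for t i j
    using kernel[of t] by (simp add: cext_scaleR mscale_def mult_ac)
  moreover have "((\<lambda>t. (cext M \<xi>)$i$j * exp (- (z + of_real \<gamma>) * of_real t))
      has_integral (cext M \<xi>)$i$j * (1 / (z + of_real \<gamma>))) {0..}" for i j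
    using assms by (intro has_integral_mult_right has_integral_cexp_neg_to_infinity) simp
  ultimately have "((\<lambda>t. exp (- z * of_real t) * (cext (\<lambda>X. exp (- \<gamma> * t) *\<^sub>R M X) \<xi>)$i$j)
      has_integral (cext M \<xi>)$i$j * (1 / (z + of_real \<gamma>))) {0..}" for i j
    by (simp only:)
  then show ?thesis
    unfolding laplace_tensor_def mscale_def by (simp add: vec_eq_iff integral_unique mult.commute)
qed

lemma ddot_cext_plus_laplace_exp_kernel:
  fixes z :: complex and \<gamma> :: real
  assumes "sym_tensor A" and "sym_tensor B" and "sym_mat \<xi>" and "0 < Re z + \<gamma>"
  shows "(cext A \<xi> + laplace_tensor (\<lambda>t X. - (exp (- \<gamma> * t) *\<^sub>R B X)) z \<xi>) ::: mcnj (mscale z \<xi>)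
    = cnj z * (herm_form A \<xi> - herm_form B \<xi> / (z + \<gamma>))"
proof -
  have "laplace_tensor (\<lambda>t X. - (exp (- \<gamma> * t) *\<^sub>R B X)) z \<xi> = mscale (1 / (z + \<gamma>)) (- cext B \<xi>)"
    using laplace_tensor_exp_kernel[OF assms(4), of "\<lambda>X. - B X" \<xi>] by (simp add: cext_uminus)
  then show ?thesis
    using assms
    by (simp add: ddot_add_left ddot_mscale_left ddot_uminus_left ddot_mcnj_mscale_right cext_ddot_mcnj
        algebra_simps)
qed

lemma Re_cnj_mult_resolvent_ge:
  fixes z :: complex and a b \<gamma> \<nu> :: real
  assumes "0 \<le> Re z" and "0 < \<gamma>" and "0 \<le> \<nu>" and "\<nu> \<le> b" and "\<gamma> * \<nu> \<le> \<gamma> * a - b"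
  shows "\<nu> * (Re z + (Im z)\<^sup>2 / (cmod (z + \<gamma>))\<^sup>2) \<le> Re (cnj z * (a - b / (z + \<gamma>)))"
proof -
  define x y where "x = Re z" and "y = Im z"
  define D where "D = (cmod (z + \<gamma>))\<^sup>2"
  have D_eq: "D = (x + \<gamma>)\<^sup>2 + y\<^sup>2"
    by (simp add: D_def x_def y_def cmod_power2)
  have "0 < D"
    using assms(1,2) by (simp add: D_eq x_def add_pos_nonneg)
  have Re_eq: "Re (cnj z * (a - b / (z + \<gamma>))) = x * (a - b * (x + \<gamma>) / D) + b * y\<^sup>2 / D"
  proof -
    have "Re (cnj z * (a - b / (z + \<gamma>))) = x * a - b * (x * (x + \<gamma>) - y\<^sup>2) / D"
      by (simp add: Re_divide' D_def x_def y_def power2_eq_square algebra_simps diff_divide_distrib)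
    then show ?thesis
      using \<open>0 < D\<close> by (simp add: field_simps power2_eq_square)
  qed
  have "\<gamma> * \<nu> \<le> \<gamma> * a"
    using assms(3-5) by linarith
  then have "\<nu> \<le> a"
    using assms(2) by simp
  have "a * D - b * (x + \<gamma>) = (x + \<gamma>) * (a * x + (\<gamma> * a - b)) + a * y\<^sup>2"
    by (simp add: D_eq power2_eq_square algebra_simps)
  also have "\<dots> \<ge> (x + \<gamma>) * (\<nu> * x + \<gamma> * \<nu>) + \<nu> * y\<^sup>2"
    using assms \<open>\<nu> \<le> a\<close> by (intro add_mono mult_left_mono mult_right_mono) (auto simp: x_def)
  finally have "\<nu> \<le> a - b * (x + \<gamma>) / D"
    using \<open>0 < D\<close> by (simp add: D_eq field_simps power2_eq_square algebra_simps)
  then have "x * \<nu> \<le> x * (a - b * (x + \<gamma>) / D)"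
    using assms(1) by (simp add: x_def mult_left_mono)
  moreover have "\<nu> * y\<^sup>2 / D \<le> b * y\<^sup>2 / D"
    using assms(4) \<open>0 < D\<close> by (simp add: divide_right_mono mult_right_mono)
  ultimately show ?thesis
    unfolding Re_eq by (simp add: D_def x_def y_def distrib_left mult.commute)
qed

lemma Im_cnj_mult_resolvent_le:
  fixes z :: complex and a b \<gamma> \<nu> :: real
  assumes "0 \<le> Re z" and "0 < \<gamma>" and "0 \<le> b" and "\<gamma> * \<nu> \<le> \<gamma> * a - b"
  shows "Im (cnj z * (a - b / (z + \<gamma>))) * Im z \<le> - \<nu> * (Im z)\<^sup>2"
proof -
  define x y where "x = Re z" and "y = Im z"
  define D where "D = (cmod (z + \<gamma>))\<^sup>2"
  have D_eq: "D = (x + \<gamma>)\<^sup>2 + y\<^sup>2"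
    by (simp add: D_def x_def y_def cmod_power2)
  have "0 < D"
    using assms(1,2) by (simp add: D_eq x_def add_pos_nonneg)
  have Im_eq: "Im (cnj z * (a - b / (z + \<gamma>))) * y = - y\<^sup>2 * (a - b * (2 * x + \<gamma>) / D)"
    by (simp add: Im_divide' D_def x_def y_def power2_eq_square algebra_simps diff_divide_distrib)
  have "\<gamma> * (2 * x + \<gamma>) \<le> D"
    unfolding D_eq by (simp add: power2_eq_square algebra_simps add_nonneg_nonneg)
  then have "b * (\<gamma> * (2 * x + \<gamma>)) \<le> b * D"
    using assms(3) by (rule mult_left_mono)
  then have "b * (2 * x + \<gamma>) / D \<le> b / \<gamma>"
    using assms(2) \<open>0 < D\<close> by (simp add: field_simps mult_ac)
  also have "\<dots> \<le> a - \<nu>"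
    using assms(2,4) by (simp add: field_simps)
  finally have "\<nu> \<le> a - b * (2 * x + \<gamma>) / D"
    by simp
  then have "\<nu> * y\<^sup>2 \<le> (a - b * (2 * x + \<gamma>) / D) * y\<^sup>2"
    by (rule mult_right_mono) simp
  then show ?thesis
    unfolding y_def[symmetric] Im_eq by (simp add: mult.commute)
qed

lemma Re_plus_cmod_ratio_le:
  fixes z :: complex and \<gamma> :: real
  assumes "0 \<le> Re z"
  shows "Re z + (cmod z)\<^sup>2 / (1 + (cmod z)\<^sup>2) \<le> 2 * (1 + \<gamma>\<^sup>2) * (Re z + (Im z)\<^sup>2 / (cmod (z + \<gamma>))\<^sup>2)"
proof -
  define x y where "x = Re z" and "y = Im z"
  define D where "D = (cmod (z + \<gamma>))\<^sup>2"
  define r where "r = 1 + x\<^sup>2 + y\<^sup>2"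
  have D_eq: "D = (x + \<gamma>)\<^sup>2 + y\<^sup>2"
    by (simp add: D_def x_def y_def cmod_power2)
  have "0 < r"
    by (simp add: r_def add_pos_nonneg)
  have "x\<^sup>2 / r \<le> x / 2"
  proof -
    have "2 * x \<le> r"
      using sum_power2_ge_zero[of "x - 1" y] by (simp add: r_def power2_eq_square algebra_simps)
    then have "x * (2 * x) \<le> x * r"
      using assms by (simp add: x_def mult_left_mono)
    then show ?thesis
      using \<open>0 < r\<close> by (simp add: field_simps power2_eq_square mult_ac)
  qed
  moreover have "y\<^sup>2 / r \<le> 2 * (1 + \<gamma>\<^sup>2) * (y\<^sup>2 / D)"
  proof (cases "y = 0")
    case False
    have "2 * (1 + \<gamma>\<^sup>2) * r - D = (x - \<gamma>)\<^sup>2 + 2 + y\<^sup>2 + 2 * (\<gamma> * x)\<^sup>2 + 2 * (\<gamma> * y)\<^sup>2"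
      by (simp add: D_eq r_def power2_eq_square algebra_simps)
    then have "D \<le> 2 * (1 + \<gamma>\<^sup>2) * r"
      by (smt (verit) zero_le_power2)
    then have "y\<^sup>2 * D \<le> y\<^sup>2 * (2 * (1 + \<gamma>\<^sup>2) * r)"
      by (rule mult_left_mono) simp
    moreover have "0 < D"
      using False by (simp add: D_eq add_nonneg_pos)
    ultimately show ?thesis
      using \<open>0 < r\<close> by (simp add: field_simps mult_ac)
  qed simp
  moreover have "3 / 2 * x \<le> 2 * (1 + \<gamma>\<^sup>2) * x"
    using assms by (intro mult_right_mono) (auto simp: x_def)
  moreover have "(cmod z)\<^sup>2 / (1 + (cmod z)\<^sup>2) = x\<^sup>2 / r + y\<^sup>2 / r"
    by (simp add: r_def x_def y_def cmod_power2 add_divide_distrib add.assoc)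
  ultimately show ?thesis
    unfolding x_def[symmetric] y_def[symmetric] D_def[symmetric] distrib_left by linarith
qed

lemma cnj_mult_resolvent_bounds:
  fixes z :: complex and a b \<gamma> \<nu> :: real
  assumes "0 \<le> Re z" and "0 < \<gamma>" and "0 \<le> \<nu>" and "\<nu> \<le> b" and "\<gamma> * \<nu> \<le> \<gamma> * a - b"
  defines "\<kappa> \<equiv> \<nu> / (2 * (1 + \<gamma>\<^sup>2))"
  shows "\<kappa> * (Re z + (cmod z)\<^sup>2 / (1 + (cmod z)\<^sup>2)) \<le> Re (cnj z * (a - b / (z + \<gamma>)))"
    and "Im (cnj z * (a - b / (z + \<gamma>))) * Im z \<le> - \<kappa> * (Im z)\<^sup>2"
proof -
  have "0 < 2 * (1 + \<gamma>\<^sup>2)"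
    by (simp add: add_pos_nonneg)
  have "\<kappa> * (Re z + (cmod z)\<^sup>2 / (1 + (cmod z)\<^sup>2))
      \<le> \<kappa> * (2 * (1 + \<gamma>\<^sup>2) * (Re z + (Im z)\<^sup>2 / (cmod (z + \<gamma>))\<^sup>2))"
    using Re_plus_cmod_ratio_le[OF assms(1), of \<gamma>] by (rule mult_left_mono) (simp add: \<kappa>_def assms(3))
  also have "\<dots> = \<nu> * (Re z + (Im z)\<^sup>2 / (cmod (z + \<gamma>))\<^sup>2)"
    using \<open>0 < 2 * (1 + \<gamma>\<^sup>2)\<close> by (simp add: \<kappa>_def)
  also have "\<dots> \<le> Re (cnj z * (a - b / (z + \<gamma>)))"
    using assms(1-5) by (rule Re_cnj_mult_resolvent_ge)
  finally show "\<kappa> * (Re z + (cmod z)\<^sup>2 / (1 + (cmod z)\<^sup>2)) \<le> Re (cnj z * (a - b / (z + \<gamma>)))" .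
  have "0 \<le> b"
    using assms(3,4) by linarith
  have "Im (cnj z * (a - b / (z + \<gamma>))) * Im z \<le> - \<nu> * (Im z)\<^sup>2"
    using assms(1,2) \<open>0 \<le> b\<close> assms(5) by (rule Im_cnj_mult_resolvent_le)
  also have "\<dots> \<le> - \<kappa> * (Im z)\<^sup>2"
  proof -
    have "\<nu> * 1 \<le> \<nu> * (2 * (1 + \<gamma>\<^sup>2))"
      by (rule mult_left_mono) (simp_all add: assms(3))
    then have "\<kappa> \<le> \<nu>"
      using \<open>0 < 2 * (1 + \<gamma>\<^sup>2)\<close> by (simp add: \<kappa>_def pos_divide_le_eq)
    then show ?thesis
      using mult_right_mono[of \<kappa> \<nu> "(Im z)\<^sup>2"] by simp
  qed
  finally show "Im (cnj z * (a - b / (z + \<gamma>))) * Im z \<le> - \<kappa> * (Im z)\<^sup>2" .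
qed

lemma positive_tensors_common_coercivity:
  fixes A B :: "real^'n::finite^'n \<Rightarrow> real^'n^'n" and \<gamma> :: real
  assumes "linear A" and "linear B" and "positive_tensor B"
    and "0 < \<gamma>" and "positive_tensor (\<lambda>X. \<gamma> *\<^sub>R A X - B X)"
  shows "\<exists>\<mu>>0. \<forall>\<xi>. sym_mat \<xi> \<longrightarrow>
    \<mu> * (norm \<xi>)\<^sup>2 \<le> herm_form B \<xi> \<and> \<gamma> * (\<mu> * (norm \<xi>)\<^sup>2) \<le> \<gamma> * herm_form A \<xi> - herm_form B \<xi>"
proof -
  obtain \<beta> where "\<beta> > 0" and \<beta>: "\<And>\<xi>. sym_mat \<xi> \<Longrightarrow> \<beta> * (norm \<xi>)\<^sup>2 \<le> herm_form B \<xi>"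
    using positive_tensor_coercive[OF assms(2,3)] by blast
  have "linear (\<lambda>X. \<gamma> *\<^sub>R A X - B X)"
    by (intro linear_compose_sub linear_compose_scale_right assms(1,2))
  moreover have "herm_form (\<lambda>X. \<gamma> *\<^sub>R A X - B X) \<xi> = \<gamma> * herm_form A \<xi> - herm_form B \<xi>" for \<xi>
    by (simp add: herm_form_def inner_diff_left distrib_left)
  ultimately obtain \<delta> where "\<delta> > 0"
    and \<delta>: "\<And>\<xi>. sym_mat \<xi> \<Longrightarrow> \<delta> * (norm \<xi>)\<^sup>2 \<le> \<gamma> * herm_form A \<xi> - herm_form B \<xi>"
    using positive_tensor_coercive[of "\<lambda>X. \<gamma> *\<^sub>R A X - B X"] assms(5) by metis
  define \<mu> where "\<mu> = min \<beta> (\<delta> / \<gamma>)"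
  have "\<mu> > 0"
    using \<open>\<beta> > 0\<close> \<open>\<delta> > 0\<close> assms(4) by (simp add: \<mu>_def)
  moreover have "\<mu> \<le> \<beta>" and "\<gamma> * \<mu> \<le> \<delta>"
    using assms(4) by (simp_all add: \<mu>_def min_def field_simps)
  then have "\<mu> * (norm \<xi>)\<^sup>2 \<le> \<beta> * (norm \<xi>)\<^sup>2" and "\<gamma> * (\<mu> * (norm \<xi>)\<^sup>2) \<le> \<delta> * (norm \<xi>)\<^sup>2"
    for \<xi> :: "complex^'n^'n"
    by (simp_all add: mult_right_mono flip: mult.assoc)
  ultimately show ?thesis
    using \<beta> \<delta> by (meson order_trans)
qed

theorem proposition4p5:
  fixes A B :: "real^'n::finite^'n \<Rightarrow> real^'n^'n" and \<gamma> :: real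
  assumes "is_tensor A" and "sym_tensor A" and "positive_tensor A"
    and "is_tensor B" and "sym_tensor B" and "positive_tensor B"
    and "\<gamma> > 0"
    and "positive_tensor (\<lambda>X. \<gamma> *\<^sub>R A X - B X)"
  shows "\<exists>c>0. \<forall>z::complex. Re z > 0 \<longrightarrow> (\<forall>\<xi>::complex^'n^'n. sym_mat \<xi> \<longrightarrow>
      (let S = (\<lambda>t X. - (exp (- \<gamma> * t) *\<^sub>R B X));
           P = (cext A \<xi> + laplace_tensor S z \<xi>) ::: mcnj (mscale z \<xi>)
       in Re P \<ge> c * (Re z + (cmod z)\<^sup>2 / (1 + (cmod z)\<^sup>2)) * (norm \<xi>)\<^sup>2
        \<and> Im P * Im z \<le> - c * \<bar>Im z\<bar>\<^sup>2 * (norm \<xi>)\<^sup>2))"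
proof -
  obtain \<mu> where "\<mu> > 0" and \<mu>: "\<And>\<xi>. sym_mat \<xi> \<Longrightarrow>
      \<mu> * (norm \<xi>)\<^sup>2 \<le> herm_form B \<xi> \<and> \<gamma> * (\<mu> * (norm \<xi>)\<^sup>2) \<le> \<gamma> * herm_form A \<xi> - herm_form B \<xi>"
    using positive_tensors_common_coercivity[of A B \<gamma>] assms by (auto simp: is_tensor_def)
  define c where "c = \<mu> / (2 * (1 + \<gamma>\<^sup>2))"
  have "c > 0"
    using \<open>\<mu> > 0\<close> by (simp add: c_def add_pos_nonneg)
  show ?thesis
  proof (intro exI[of _ c] conjI allI impI \<open>c > 0\<close>)
    fix z :: complex and \<xi> :: "complex^'n^'n"
    assume "Re z > 0" and "sym_mat \<xi>"
    have P_eq: "(cext A \<xi> + laplace_tensor (\<lambda>t X. - (exp (- \<gamma> * t) *\<^sub>R B X)) z \<xi>) ::: mcnj (mscale z \<xi>)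
        = cnj z * (herm_form A \<xi> - herm_form B \<xi> / (z + \<gamma>))"
      by (rule ddot_cext_plus_laplace_exp_kernel[OF assms(2,5) \<open>sym_mat \<xi>\<close>])
        (use \<open>Re z > 0\<close> assms(7) in simp)
    from cnj_mult_resolvent_bounds[of z \<gamma> "\<mu> * (norm \<xi>)\<^sup>2" "herm_form B \<xi>" "herm_form A \<xi>"]
    show "let S = (\<lambda>t X. - (exp (- \<gamma> * t) *\<^sub>R B X));
        P = (cext A \<xi> + laplace_tensor S z \<xi>) ::: mcnj (mscale z \<xi>)
      in Re P \<ge> c * (Re z + (cmod z)\<^sup>2 / (1 + (cmod z)\<^sup>2)) * (norm \<xi>)\<^sup>2
        \<and> Im P * Im z \<le> - c * \<bar>Im z\<bar>\<^sup>2 * (norm \<xi>)\<^sup>2"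
      using \<open>Re z > 0\<close> assms(7) \<open>\<mu> > 0\<close> \<mu>[OF \<open>sym_mat \<xi>\<close>]
      unfolding Let_def P_eq by (simp add: c_def mult_ac)
  qed
qed

end
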